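(* The family $\mathcal{A}$ of all infinite subsets of $\mathbb{N}^{<\mathbb{N}}$ which contain no infinite chain is an M-family.
   Context: $\mathbb{N}^{<\mathbb{N}}$ is the tree of finite sequences of naturals ordered by end-extension $\sqsubset$; a chain is a subset linearly ordered by $\sqsubseteq$. An M-family is a hereditary (closed under infinite subsets) family $\mathcal{A}$ of infinite subsets such that for every sequence $(A_n)_n$ in $\mathcal{A}$ there is $A\in\mathcal{A}$ with $A\setminus\bigcup_{i\ge n}A_i$ finite for every $n$. *)

theory Defs
  imports Main "HOL-Library.Sublist"
begin

definition hereditary_family :: "'a set set \<Rightarrow> bool" where
  "hereditary_family F \<longleftrightarrow>
     (\<forall>A\<in>F. infinite A) \<and> (\<forall>A\<in>F. \<forall>B. B \<subseteq> A \<and> infinite B \<longrightarrow> B \<in> F)"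

definition M_family :: "'a set set \<Rightarrow> bool" where
  "M_family F \<longleftrightarrow> hereditary_family F \<and>
     (\<forall>As :: nat \<Rightarrow> 'a set. (\<forall>n. As n \<in> F) \<longrightarrow>
        (\<exists>A\<in>F. \<forall>n. finite (A - (\<Union>i\<in>{n..}. As i))))"

text \<open>The tree of finite sequences of naturals is modelled as nat list,
  ordered by end-extension (prefix order).\<close>

definition is_chain_tree :: "nat list set \<Rightarrow> bool" where
  "is_chain_tree C \<longleftrightarrow> (\<forall>s\<in>C. \<forall>t\<in>C. prefix s t \<or> prefix t s)"

definition no_inf_chain_family :: "nat list set set" where
  "no_inf_chain_family = {A. infinite A \<and> \<not> (\<exists>C\<subseteq>A. infinite C \<and> is_chain_tree C)}"

end

theory Submission
  imports Defs
begin

text \<open>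
  Given (A_n) in the family, we build by recursion an infinite
  antichain a_0, a_1, ... of the tree with each a_n taken from some A_m, m \<ge> n.
  Its range contains no infinite chain (a chain meets an antichain in at most one
  point), and every a_j with j \<ge> n lies in the union of the A_i, i \<ge> n, so the
  range is almost contained in every tail union.

  To keep the recursion going we maintain, for the finite set S of points chosen
  so far, the invariant that infinitely many A_m have infinitely many points
  outside the cones above S ("S is rich").  The key observation is that the
  points a whose addition would destroy richness form a chain; since A_m contains
  no infinite chain, a suitable new point of A_m, incomparable with all of S,
  can always be found.
\<close>

lemma no_inf_chain_family_hereditary: "hereditary_family no_inf_chain_family"
  unfolding hereditary_family_def no_inf_chain_family_def by blast

text \<open>The range of a sequence of pairwise prefix-incomparable nodes (an infinite
  antichain) belongs to the family: the sequence is injective, and any chain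
  inside its range has at most one element.\<close>

lemma antichain_range_in_family:
  fixes a :: "nat \<Rightarrow> nat list"
  assumes anti: "\<And>i j. i \<noteq> j \<Longrightarrow> \<not> prefix (a i) (a j)"
  shows "range a \<in> no_inf_chain_family"
  unfolding no_inf_chain_family_def
proof (intro CollectI conjI notI)
  have "inj a"
  proof (rule injI)
    fix i j assume "a i = a j"
    then have "prefix (a i) (a j)" by simp
    then show "i = j" using anti by blast
  qed
  then show "finite (range a) \<Longrightarrow> False"
    using finite_imageD[of a UNIV] by simp
next
  assume "\<exists>C\<subseteq>range a. infinite C \<and> is_chain_tree C"
  then obtain C where C: "C \<subseteq> range a" "infinite C" "is_chain_tree C" by blast
  obtain x where x: "x \<in> C" using C(2) infinite_imp_nonempty by blast
  have "C \<subseteq> {x}"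
  proof
    fix y assume y: "y \<in> C"
    obtain i j where ij: "x = a i" "y = a j" using x y C(1) by blast
    have "prefix x y \<or> prefix y x"
      using C(3) x y unfolding is_chain_tree_def by blast
    then have "i = j" using anti[of i j] anti[of j i] ij by blast
    then show "y \<in> {x}" using ij by simp
  qed
  then show False using C(2) finite_subset by blast
qed

definition cone_free :: "nat list set \<Rightarrow> nat list set" where
  "cone_free S = {t. \<forall>s\<in>S. \<not> prefix s t}"

text \<open>The recursion invariant: infinitely many members of the sequence keep
  infinitely many points outside the cones over S.\<close>

definition rich :: "(nat \<Rightarrow> nat list set) \<Rightarrow> nat list set \<Rightarrow> bool" where
  "rich As S \<longleftrightarrow> infinite {m. infinite (As m \<inter> cone_free S)}"

lemma cone_free_insert: "cone_free (insert a S) = cone_free S - {t. prefix a t}"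
  by (auto simp: cone_free_def)

lemma rich_empty:
  assumes "\<forall>n. As n \<in> no_inf_chain_family"
  shows "rich As {}"
  using assms by (simp add: rich_def cone_free_def no_inf_chain_family_def)

text \<open>For two such nodes a, b, some A_m with infinitely
  many points outside the cones over S has only finitely many outside the cone over
  a and finitely many outside the cone over b; so some point lies above both.\<close>

lemma bad_extensions_chain:
  assumes "rich As S"
  shows "is_chain_tree {a. \<not> rich As (insert a S)}"
  unfolding is_chain_tree_def
proof (intro ballI, simp only: mem_Collect_eq)
  fix a b
  assume "\<not> rich As (insert a S)" "\<not> rich As (insert b S)"
  then have fin: "finite {m. infinite (As m \<inter> cone_free S - {t. prefix a t})}"
                 "finite {m. infinite (As m \<inter> cone_free S - {t. prefix b t})}"
    by (simp_all add: rich_def cone_free_insert Int_Diff)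
  have "infinite ({m. infinite (As m \<inter> cone_free S)}
                  - {m. infinite (As m \<inter> cone_free S - {t. prefix a t})}
                  - {m. infinite (As m \<inter> cone_free S - {t. prefix b t})})"
    using assms fin by (simp add: rich_def Diff_infinite_finite)
  then obtain m where m: "infinite (As m \<inter> cone_free S)"
      "finite (As m \<inter> cone_free S - {t. prefix a t})"
      "finite (As m \<inter> cone_free S - {t. prefix b t})"
    using infinite_imp_nonempty by blast
  have "infinite (As m \<inter> cone_free S - (As m \<inter> cone_free S - {t. prefix a t})
                                    - (As m \<inter> cone_free S - {t. prefix b t}))"
    using m by (simp add: Diff_infinite_finite)
  then obtain t where "t \<in> As m \<inter> cone_free S - (As m \<inter> cone_free S - {t. prefix a t})
                                    - (As m \<inter> cone_free S - {t. prefix b t})"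
    using infinite_imp_nonempty by blast
  then have "prefix a t" "prefix b t" by auto
  then show "prefix a b \<or> prefix b a" using prefix_same_cases by blast
qed

text \<open>A finite set of nodes has only finitely many prefixes; the new node must
  avoid them to be incomparable with S.\<close>

lemma finite_prefix_closure:
  assumes "finite S"
  shows "finite {t. \<exists>s\<in>S. prefix t s}"
proof -
  have "{t. \<exists>s\<in>S. prefix t s} = (\<Union>s\<in>S. set (prefixes s))" by auto
  then show ?thesis using assms by simp
qed

text \<open>Such a node is found among the infinitely many points of A_m outside the cones
  over S, discarding the finitely many bad ones (a chain inside A_m) and the
  finitely many prefixes of nodes of S.\<close>

lemma rich_extension:
  assumes family: "\<forall>n. As n \<in> no_inf_chain_family"
    and "finite S" and rich: "rich As S"
  shows "\<exists>a. (\<exists>m\<ge>n. a \<in> As m) \<and> (\<forall>s\<in>S. \<not> prefix s a \<and> \<not> prefix a s)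
             \<and> rich As (insert a S)"
proof -
  define Bad where "Bad = {a. \<not> rich As (insert a S)}"
  have "infinite ({m. infinite (As m \<inter> cone_free S)} - {..<n})"
    using rich unfolding rich_def by (simp add: Diff_infinite_finite)
  then obtain m where "m \<in> {m. infinite (As m \<inter> cone_free S)} - {..<n}"
    using infinite_imp_nonempty by blast
  then have m: "n \<le> m" "infinite (As m \<inter> cone_free S)" by auto
  have "is_chain_tree (As m \<inter> Bad)"
    using bad_extensions_chain[OF rich] unfolding Bad_def is_chain_tree_def by blast
  then have "finite (As m \<inter> Bad)"
    using family unfolding no_inf_chain_family_def by blast
  then have "infinite (As m \<inter> cone_free S - (As m \<inter> Bad) - {t. \<exists>s\<in>S. prefix t s})"
    using m(2) finite_prefix_closure[OF \<open>finite S\<close>] by (simp add: Diff_infinite_finite)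
  then obtain a where "a \<in> As m \<inter> cone_free S - (As m \<inter> Bad) - {t. \<exists>s\<in>S. prefix t s}"
    using infinite_imp_nonempty by blast
  then show ?thesis
    using m(1) by (auto simp: Bad_def cone_free_def)
qed

lemma diagonal_antichain:
  assumes family: "\<forall>n. As n \<in> no_inf_chain_family"
  obtains a :: "nat \<Rightarrow> nat list"
  where "\<And>n. \<exists>m\<ge>n. a n \<in> As m"
    and "\<And>i j. i \<noteq> j \<Longrightarrow> \<not> prefix (a i) (a j)"
proof -
  define good where "good n S a \<longleftrightarrow> (\<exists>m\<ge>n. a \<in> As m)
      \<and> (\<forall>s\<in>S. \<not> prefix s a \<and> \<not> prefix a s) \<and> rich As (insert a S)" for n S a
  define next_node where "next_node n S = (SOME a. good n S a)" for n S
  define Ss where "Ss = rec_nat {} (\<lambda>n S. insert (next_node n S) S)"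
  define a where "a n = next_node n (Ss n)" for n
  have Ss_Suc: "Ss (Suc n) = insert (a n) (Ss n)" for n
    by (simp add: Ss_def a_def)
  have Ss_eq: "Ss n = a ` {..<n}" for n
    by (induction n) (simp_all add: Ss_Suc lessThan_Suc, simp add: Ss_def)
  have good_next: "good n (Ss n) (a n)" if "rich As (Ss n)" for n
  proof -
    have "finite (Ss n)" by (simp add: Ss_eq)
    then have "\<exists>b. good n (Ss n) b"
      using rich_extension[OF family _ that] unfolding good_def by blast
    then show ?thesis unfolding a_def next_node_def by (rule someI_ex)
  qed
  have rich_Ss: "rich As (Ss n)" for n
  proof (induction n)
    case 0
    show ?case using rich_empty[OF family] by (simp add: Ss_def)
  next
    case (Suc n)
    then show ?case using good_next[of n] by (simp add: Ss_Suc good_def)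
  qed
  have good_all: "good n (Ss n) (a n)" for n
    using good_next rich_Ss by blast
  have incomparable: "\<not> prefix (a i) (a j) \<and> \<not> prefix (a j) (a i)" if "i < j" for i j
  proof -
    have "a i \<in> Ss j" using that by (simp add: Ss_eq)
    then show ?thesis using good_all[of j] unfolding good_def by blast
  qed
  show thesis
  proof (rule that)
    show "\<exists>m\<ge>n. a n \<in> As m" for n using good_all[of n] unfolding good_def by blast
    show "\<not> prefix (a i) (a j)" if "i \<noteq> j" for i j
    proof -
      from that have "i < j \<or> j < i" by arith
      then show ?thesis using incomparable by blast
    qed
  qed
qed

text \<open>A sequence whose n-th term lies in some A_m, m \<ge> n, has range almost
  contained in every tail union of the A_i: only a_0, ..., a_{n-1} can be missing.\<close>

lemma range_almost_in_tails:
  fixes a :: "nat \<Rightarrow> 'a"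
  assumes "\<And>n. \<exists>m\<ge>n. a n \<in> As m"
  shows "finite (range a - (\<Union>i\<in>{n..}. As i))"
proof -
  have "range a - (\<Union>i\<in>{n..}. As i) \<subseteq> a ` {..<n}"
  proof
    fix x assume x: "x \<in> range a - (\<Union>i\<in>{n..}. As i)"
    then obtain j where j: "x = a j" by blast
    obtain m where m: "j \<le> m" "a j \<in> As m" using assms by blast
    have "j < n"
    proof (rule ccontr)
      assume "\<not> j < n"
      then have "m \<in> {n..}" using m(1) by simp
      then have "x \<in> (\<Union>i\<in>{n..}. As i)" using m(2) j by blast
      then show False using x by blast
    qed
    then show "x \<in> a ` {..<n}" using j by blast
  qed
  then show ?thesis using finite_subset by blast
qed

theorem mainTheorem18:
  shows "M_family no_inf_chain_family"
  unfolding M_family_def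
proof (intro conjI allI impI)
  show "hereditary_family no_inf_chain_family"
    by (rule no_inf_chain_family_hereditary)
next
  fix As :: "nat \<Rightarrow> nat list set"
  assume family: "\<forall>n. As n \<in> no_inf_chain_family"
  obtain a where in_tail: "\<And>n. \<exists>m\<ge>n. a n \<in> As m"
    and anti: "\<And>i j. i \<noteq> j \<Longrightarrow> \<not> prefix (a i) (a j)"
    using diagonal_antichain[OF family] by blast
  show "\<exists>A\<in>no_inf_chain_family. \<forall>n. finite (A - (\<Union>i\<in>{n..}. As i))"
  proof
    show "range a \<in> no_inf_chain_family" by (rule antichain_range_in_family[OF anti])
    show "\<forall>n. finite (range a - (\<Union>i\<in>{n..}. As i))"
      using range_almost_in_tails[OF in_tail] by blast
  qed
qed

end
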